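(* Let $X$ be a nonnegative random variable with c.d.f. $F$ and $\overline{F}=1-F$, and let $\boldsymbol{\Lambda}$ be a random vector with values in $\mathcal{R}\subseteq\mathbb{R}^n$ and distribution $H_{1,\ldots,n}$, such that conditionally on $\boldsymbol{\Lambda}=\boldsymbol{\lambda}$, $X$ has c.d.f. $C(\cdot;\boldsymbol{\lambda})$ (with $\overline{C}=1-C$). Let $q\in[0,1)$ and, for $\boldsymbol{\lambda}\in\mathcal{R}$, let $q^\ast(\boldsymbol{\lambda})=C(VaR_q[X];\boldsymbol{\lambda})$ and let $CTE_{q^\ast}[X\mid\boldsymbol{\Lambda}=\boldsymbol{\lambda}]$ denote the conditional tail expectation at level $q^\ast(\boldsymbol{\lambda})$ of the distribution $C(\cdot;\boldsymbol{\lambda})$. Then, whenever the quantities involved exist, \[ CTE_q[X]=\frac{\mathbf{E}\left[\overline{C}(VaR_q[X];\boldsymbol{\Lambda})\,CTE_{q^\ast}[X\mid\boldsymbol{\Lambda}]\right]}{\overline{F}(VaR_q[X])}. \]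
   Context: For a random variable $Y$ and $q\in[0,1)$: $VaR_q[Y]=\inf\{x\in\mathbb{R}:\mathbf{P}[Y\le x]\ge q\}$ and $CTE_q[Y]=\mathbf{E}[Y\mid Y>VaR_q[Y]]$; these are applied to a conditional distribution in the obvious way. *)

theory Defs
  imports "HOL-Probability.Probability"
begin

text \<open>Distribution functions of a real distribution N evaluated at an extended real
  point v (needed since VaR at level 0 may be minus infinity).\<close>
definition cdf_at :: "real measure \<Rightarrow> ereal \<Rightarrow> real" where
  "cdf_at N v = measure N {x. ereal x \<le> v}"

definition survival_at :: "real measure \<Rightarrow> ereal \<Rightarrow> real" where
  "survival_at N v = measure N {x. v < ereal x}"

definition VaR :: "real \<Rightarrow> real measure \<Rightarrow> ereal" where
  "VaR q N = Inf {ereal x | x. q \<le> cdf N x}"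

definition CTE :: "real \<Rightarrow> real measure \<Rightarrow> real" where
  "CTE q N = (\<integral>x. indicator {x. VaR q N < ereal x} x * x \<partial>N) / measure N {x. VaR q N < ereal x}"

end

theory Submission
  imports Defs
begin

text \<open>The law of X is the mixture of the conditional laws C(\<cdot>;\<lambda>) under the law of \<Lambda>, so
  the truncated mean E[X; X > VaR_q[X]] splits, by Fubini for the Giry monad, into the average
  over \<Lambda> of the conditional truncated means. For each conditional law, the level
  q* = C(VaR_q[X]; \<lambda>) has a VaR that differs from VaR_q[X] only across a flat stretch of
  C(\<cdot>; \<lambda>), a null set; hence the conditional truncated mean is exactly the conditional
  survival probability times the conditional CTE at level q*.\<close>

lemma integral_bind_nonneg:
  fixes f :: "'b \<Rightarrow> real"
  assumes N[measurable]: "N \<in> M \<rightarrow>\<^sub>M subprob_algebra K"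
    and f[measurable]: "f \<in> borel_measurable K" and nonneg: "\<And>y. 0 \<le> f y"
    and int: "integrable (M \<bind> N) f"
  shows "AE x in M. integrable (N x) f"
    and "integrable M (\<lambda>x. integral\<^sup>L (N x) f)"
    and "integral\<^sup>L (M \<bind> N) f = (\<integral>x. integral\<^sup>L (N x) f \<partial>M)"
proof -
  have bind: "(\<integral>\<^sup>+y. f y \<partial>(M \<bind> N)) = (\<integral>\<^sup>+x. (\<integral>\<^sup>+y. f y \<partial>N x) \<partial>M)"
    by (rule nn_integral_bind[OF _ N]) measurable
  have fin: "(\<integral>\<^sup>+y. f y \<partial>(M \<bind> N)) < \<infinity>"
    using int nonneg by (simp add: integrable_iff_bounded)
  have "AE x in M. (\<integral>\<^sup>+y. f y \<partial>N x) \<noteq> \<infinity>"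
    using fin by (intro nn_integral_PInf_AE) (auto simp: bind)
  then have inner: "AE x in M. integrable (N x) f \<and>
      ennreal (integral\<^sup>L (N x) f) = (\<integral>\<^sup>+y. f y \<partial>N x)"
    using AE_space
  proof eventually_elim
    case (elim x)
    then have x: "x \<in> space M" by simp
    have "f \<in> borel_measurable (N x)"
      using f by (simp add: subprob_measurableD(3)[OF N x])
    then have "integrable (N x) f"
      using elim nonneg by (simp add: integrable_iff_bounded less_top)
    then show ?case
      using nonneg by (simp add: nn_integral_eq_integral)
  qed
  then show "AE x in M. integrable (N x) f" by simp
  have nn: "(\<integral>\<^sup>+x. integral\<^sup>L (N x) f \<partial>M) = (\<integral>\<^sup>+y. f y \<partial>(M \<bind> N))"
    unfolding bind using inner by (intro nn_integral_cong_AE) auto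
  show "integrable M (\<lambda>x. integral\<^sup>L (N x) f)"
    using nn fin nonneg by (simp add: integrable_iff_bounded integral_nonneg)
  show "integral\<^sup>L (M \<bind> N) f = (\<integral>x. integral\<^sup>L (N x) f \<partial>M)"
    using nn nonneg borel_measurable_integrable[OF int]
    by (simp add: integral_eq_nn_integral integral_nonneg)
qed

lemma integral_bind_integrable:
  fixes f :: "'b \<Rightarrow> real"
  assumes N[measurable]: "N \<in> M \<rightarrow>\<^sub>M subprob_algebra K"
    and f[measurable]: "f \<in> borel_measurable K" and int: "integrable (M \<bind> N) f"
  shows "integral\<^sup>L (M \<bind> N) f = (\<integral>x. integral\<^sup>L (N x) f \<partial>M)"
proof -
  define p where "p = (\<lambda>y. max 0 (f y))"
  define n where "n = (\<lambda>y. max 0 (- f y))"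
  have p_m[measurable]: "p \<in> borel_measurable K" and n_m[measurable]: "n \<in> borel_measurable K"
    unfolding p_def n_def by measurable
  have p_n: "(\<lambda>y. p y - n y) = f"
    by (auto simp: p_def n_def)
  have int_p: "integrable (M \<bind> N) p" and int_n: "integrable (M \<bind> N) n"
    using int by (auto simp: p_def n_def)
  have p: "AE x in M. integrable (N x) p" "integrable M (\<lambda>x. integral\<^sup>L (N x) p)"
      "integral\<^sup>L (M \<bind> N) p = (\<integral>x. integral\<^sup>L (N x) p \<partial>M)"
    by (rule integral_bind_nonneg[OF N p_m _ int_p]; simp add: p_def)+
  have n: "AE x in M. integrable (N x) n" "integrable M (\<lambda>x. integral\<^sup>L (N x) n)"
      "integral\<^sup>L (M \<bind> N) n = (\<integral>x. integral\<^sup>L (N x) n \<partial>M)"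
    by (rule integral_bind_nonneg[OF N n_m _ int_n]; simp add: n_def)+
  have "integral\<^sup>L (M \<bind> N) f = integral\<^sup>L (M \<bind> N) p - integral\<^sup>L (M \<bind> N) n"
    using Bochner_Integration.integral_diff[OF int_p int_n] by (simp add: p_n)
  also have "\<dots> = (\<integral>x. integral\<^sup>L (N x) p - integral\<^sup>L (N x) n \<partial>M)"
    using Bochner_Integration.integral_diff[OF p(2) n(2)] p(3) n(3) by simp
  also have "\<dots> = (\<integral>x. integral\<^sup>L (N x) f \<partial>M)"
    using p(1) n(1)
    by (intro integral_cong_AE) (measurable, auto simp: p_n Bochner_Integration.integral_diff[symmetric])
  finally show ?thesis .
qed

lemma VaR_zero: "VaR 0 P = -\<infinity>"
  unfolding VaR_def by (intro ereal_bot Inf_lower) (auto simp: cdf_def)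

text \<open>Between VaR_(cdf r) and r the cdf is flat; rational left endpoints cover that interval
  by countably many null intervals.\<close>

lemma (in real_distribution) AE_VaR_cdf_less_iff:
  "AE y in M. VaR (cdf M r) M < ereal y \<longleftrightarrow> r < y"
proof -
  define S where "S = {ereal x | x. cdf M r \<le> cdf M x}"
  have VaR_S: "VaR (cdf M r) M = Inf S"
    unfolding VaR_def S_def ..
  have VaR_le: "VaR (cdf M r) M \<le> ereal r"
    unfolding VaR_S S_def by (rule Inf_lower) auto
  define I where "I = \<rat> \<inter> {s. cdf M r \<le> cdf M s \<and> s \<le> r}"
  have null: "(\<Union>s\<in>I. {s<..r}) \<in> null_sets M"
  proof (rule null_sets_UN')
    show "countable I"
      unfolding I_def using countable_rat by auto
  next
    fix s assume "s \<in> I"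
    then have s: "cdf M r \<le> cdf M s" "s \<le> r"
      unfolding I_def by auto
    have "measure M {s<..r} = 0"
    proof (cases "s = r")
      case False
      then have "measure M {s<..r} = cdf M r - cdf M s"
        using s by (simp add: cdf_diff_eq)
      then show ?thesis
        using s measure_nonneg[of M "{s<..r}"] by linarith
    qed simp
    then show "{s<..r} \<in> null_sets M"
      by (intro null_setsI) (auto simp: emeasure_eq_measure)
  qed
  show ?thesis
  proof (rule AE_I'[OF null], rule subsetI)
    fix y assume "y \<in> {y \<in> space M. \<not> (VaR (cdf M r) M < ereal y \<longleftrightarrow> r < y)}"
    then have y: "VaR (cdf M r) M < ereal y" "y \<le> r"
      using VaR_le by (auto simp: not_less order.strict_trans1)
    then obtain x where "cdf M r \<le> cdf M x" "x < y"
      unfolding VaR_S S_def by (auto simp: Inf_less_iff)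
    moreover obtain s where "s \<in> \<rat>" "x < s" "s < y"
      using Rats_dense_in_real \<open>x < y\<close> by blast
    ultimately have "s \<in> I" "y \<in> {s<..r}"
      using y cdf_nondecreasing[of x s] unfolding I_def by auto
    then show "y \<in> (\<Union>s\<in>I. {s<..r})" by blast
  qed
qed

lemma (in real_distribution) AE_VaR_cdf_at_less_iff:
  assumes "v \<noteq> \<infinity>"
  shows "AE y in M. VaR (cdf_at M v) M < ereal y \<longleftrightarrow> v < ereal y"
proof (cases v)
  case (real r)
  have "cdf_at M v = cdf M r"
    unfolding cdf_at_def cdf_def real by (simp add: atMost_def)
  then show ?thesis
    using AE_VaR_cdf_less_iff[of r] by (simp add: real)
qed (use assms in \<open>simp_all add: cdf_at_def VaR_zero\<close>)

lemma (in real_distribution) survival_at_mult_CTE_cdf_at: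
  "survival_at M v * CTE (cdf_at M v) M = (\<integral>y. indicator {y. v < ereal y} y * y \<partial>M)"
proof (cases "measure M {y. v < ereal y} = 0")
  case True
  then have "AE y in M. y \<notin> {y. v < ereal y}"
    by (intro AE_not_in null_setsI) (auto simp: emeasure_eq_measure)
  then have "(\<integral>y. indicator {y. v < ereal y} y * y \<partial>M) = 0"
    by (subst integral_cong_AE[where g="\<lambda>_. 0"]) auto
  then show ?thesis
    using True by (simp add: survival_at_def)
next
  case False
  then have "v \<noteq> \<infinity>" by auto
  note ae = AE_VaR_cdf_at_less_iff[OF this]
  have "measure M {y. VaR (cdf_at M v) M < ereal y} = measure M {y. v < ereal y}"
    using ae by (intro measure_eq_AE) auto
  moreover have "(\<integral>y. indicator {y. VaR (cdf_at M v) M < ereal y} y * y \<partial>M)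
      = (\<integral>y. indicator {y. v < ereal y} y * y \<partial>M)"
    using ae by (intro integral_cong_AE) (auto simp: indicator_def)
  ultimately show ?thesis
    using False by (simp add: CTE_def survival_at_def)
qed

lemma (in prob_space) real_distribution_eq_bind_of_cdf:
  assumes D: "real_distribution D"
    and \<kappa>[measurable]: "\<kappa> \<in> M \<rightarrow>\<^sub>M prob_algebra borel"
    and cdf_D: "\<And>x. cdf D x = (\<integral>\<omega>. cdf (\<kappa> \<omega>) x \<partial>M)"
  shows "D = M \<bind> \<kappa>"
proof -
  have M_space: "M \<in> space (prob_algebra M)"
    by (simp add: space_prob_algebra prob_space_axioms)
  have "real_distribution (M \<bind> \<kappa>)"
    using prob_space_bind'[OF M_space \<kappa>] sets_bind'[OF M_space \<kappa>]
    by (simp add: real_distribution_def real_distribution_axioms_def)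
  moreover have "cdf (M \<bind> \<kappa>) x = cdf D x" for x
    unfolding cdf_D by (simp add: cdf_def measure_bind[OF measurable_prob_algebraD[OF \<kappa>]])
  ultimately show ?thesis
    using cdf_unique[OF D] by fastforce
qed

lemma (in prob_space) truncated_mean_bind:
  assumes \<kappa>: "\<kappa> \<in> M \<rightarrow>\<^sub>M prob_algebra borel"
    and int: "integrable (M \<bind> \<kappa>) (\<lambda>y. y)"
  shows "(\<integral>y. indicator {y. v < ereal y} y * y \<partial>(M \<bind> \<kappa>))
    = (\<integral>\<omega>. survival_at (\<kappa> \<omega>) v * CTE (cdf_at (\<kappa> \<omega>) v) (\<kappa> \<omega>) \<partial>M)"
proof -
  have "integrable (M \<bind> \<kappa>) (\<lambda>y. indicator {y. v < ereal y} y * y)"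
    using integrable_real_mult_indicator[OF _ int, of "{y. v < ereal y}"] prob_space_axioms
    by (simp add: mult.commute sets_bind'[OF _ \<kappa>] space_prob_algebra)
  then have "(\<integral>y. indicator {y. v < ereal y} y * y \<partial>(M \<bind> \<kappa>))
      = (\<integral>\<omega>. (\<integral>y. indicator {y. v < ereal y} y * y \<partial>\<kappa> \<omega>) \<partial>M)"
    by (intro integral_bind_integrable[OF measurable_prob_algebraD[OF \<kappa>]]) auto
  also have "\<dots> = (\<integral>\<omega>. survival_at (\<kappa> \<omega>) v * CTE (cdf_at (\<kappa> \<omega>) v) (\<kappa> \<omega>) \<partial>M)"
    using measurable_space[OF \<kappa>]
    by (intro Bochner_Integration.integral_cong refl real_distribution.survival_at_mult_CTE_cdf_at[symmetric])
      (simp add: space_prob_algebra real_distribution_def real_distribution_axioms_def)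
  finally show ?thesis .
qed

theorem corollary4p2:
  fixes M :: "'a measure" and X :: "'a \<Rightarrow> real" and \<Lambda> :: "'a \<Rightarrow> real ^ 'n"
    and R :: "(real ^ 'n) set" and K :: "real ^ 'n \<Rightarrow> real measure" and q :: real
  assumes "prob_space M"
    and "X \<in> borel_measurable M" and "\<forall>\<omega>\<in>space M. 0 \<le> X \<omega>"
    and "\<Lambda> \<in> borel_measurable M" and "R \<in> sets borel" and "\<forall>\<omega>\<in>space M. \<Lambda> \<omega> \<in> R"
    and "K \<in> restrict_space borel R \<rightarrow>\<^sub>M prob_algebra borel"
    and "\<forall>x::real. \<forall>B\<in>sets borel.
           measure M {\<omega>\<in>space M. X \<omega> \<le> x \<and> \<Lambda> \<omega> \<in> B}
           = (\<integral>\<omega>. indicator B (\<Lambda> \<omega>) * cdf (K (\<Lambda> \<omega>)) x \<partial>M)"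
    and "0 \<le> q" and "q < 1"
    and "integrable M X"
    and "0 < survival_at (distr M borel X) (VaR q (distr M borel X))"
  shows "CTE q (distr M borel X)
    = (\<integral>\<omega>. survival_at (K (\<Lambda> \<omega>)) (VaR q (distr M borel X))
             * CTE (cdf_at (K (\<Lambda> \<omega>)) (VaR q (distr M borel X))) (K (\<Lambda> \<omega>)) \<partial>M)
      / survival_at (distr M borel X) (VaR q (distr M borel X))"
proof -
  interpret prob_space M by fact
  define D where "D = distr M borel X"
  define \<kappa> where "\<kappa> \<omega> = K (\<Lambda> \<omega>)" for \<omega>
  have \<kappa>: "\<kappa> \<in> M \<rightarrow>\<^sub>M prob_algebra borel"
  proof -
    have "\<Lambda> \<in> M \<rightarrow>\<^sub>M restrict_space borel R"
      using assms(4,6) by (intro measurable_restrict_space2) auto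
    then show ?thesis
      unfolding \<kappa>_def using assms(7) by (rule measurable_compose)
  qed
  have "cdf D x = (\<integral>\<omega>. cdf (\<kappa> \<omega>) x \<partial>M)" for x
    using assms(8)[rule_format, where x=x and B=UNIV] assms(2)
    unfolding D_def cdf_def \<kappa>_def by (simp add: measure_distr vimage_def Int_def conj_commute)
  then have D_bind: "D = M \<bind> \<kappa>"
    using assms(2) by (intro real_distribution_eq_bind_of_cdf[OF _ \<kappa>]) (auto simp: D_def)
  have "integrable D (\<lambda>y. y)"
    using assms(2,11) unfolding D_def by (simp add: integrable_distr_eq)
  then have "(\<integral>y. indicator {y. VaR q D < ereal y} y * y \<partial>D)
      = (\<integral>\<omega>. survival_at (\<kappa> \<omega>) (VaR q D) * CTE (cdf_at (\<kappa> \<omega>) (VaR q D)) (\<kappa> \<omega>) \<partial>M)"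
    using truncated_mean_bind[OF \<kappa>] by (simp add: D_bind)
  then show ?thesis
    by (simp add: CTE_def[of q] survival_at_def[of "distr M borel X"] D_def \<kappa>_def)
qed

end
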